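(* For each integer $n\geq 6$ there exists a closed non-degenerate spherical $n$-gon whose lifted rolling monodromy for radius ratio $\rho=3$ is trivial.
   Context: A spherical polygon on the unit sphere $S^2$ has edges that are arcs of great circles; it is non-degenerate if no three consecutive vertices lie on a great circle. Identify $\mathbb{R}^3$ with the imaginary quaternions. For radius ratio $\rho$ (stationary radius over moving radius), rolling along the polygon is the curve $(\mathbf v(t),q(t))\in S^2\times S^3$ with $\mathbf v(t)$ traversing the polygon once, $q(0)=1$, and $(\rho+1)\dot{\mathbf v}=\boldsymbol\omega\times\mathbf v$, $\boldsymbol\omega\cdot\mathbf v=0$, where $\boldsymbol\omega=2\dot q\bar q$ (the angular velocity of the rotation $\mathbf x\mapsto q\mathbf x\bar q$). The lifted rolling monodromy is the final value of $q$; it is trivial if it equals $1$. *)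

theory Defs
  imports "HOL-Analysis.Analysis"
begin

text \<open>Quaternions as pairs (scalar part, vector part); R^3 is identified with the
imaginary quaternions via v \<mapsto> (0, v).\<close>

type_synonym quat = "real \<times> (real^3)"

definition qmult :: "quat \<Rightarrow> quat \<Rightarrow> quat" where
  "qmult p q = (fst p * fst q - snd p \<bullet> snd q,
                fst p *\<^sub>R snd q + fst q *\<^sub>R snd p + cross3 (snd p) (snd q))"

definition qconj :: "quat \<Rightarrow> quat" where
  "qconj p = (fst p, - snd p)"

definition qone :: quat where
  "qone = (1, 0)"

text \<open>Closed spherical n-gon with vertices V 0, ..., V (n-1) (indices taken mod n),
distinct unit vectors; edges are the (minor) great-circle arcs between consecutive vertices.\<close>

definition spherical_polygon :: "nat \<Rightarrow> (nat \<Rightarrow> real^3) \<Rightarrow> bool" where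
  "spherical_polygon n V \<longleftrightarrow> n \<ge> 3 \<and> (\<forall>i<n. norm (V i) = 1) \<and> inj_on V {..<n}"

text \<open>Non-degenerate: no three cyclically consecutive vertices lie on a great circle,
i.e. they are linearly independent (nonzero triple product).\<close>

definition nondegenerate_polygon :: "nat \<Rightarrow> (nat \<Rightarrow> real^3) \<Rightarrow> bool" where
  "nondegenerate_polygon n V \<longleftrightarrow>
     (\<forall>i<n. V (i mod n) \<bullet> cross3 (V ((i+1) mod n)) (V ((i+2) mod n)) \<noteq> 0)"

text \<open>Constant-speed parametrisation of the minor great-circle arc from a to b, s \<in> [0,1].\<close>

definition arc :: "real^3 \<Rightarrow> real^3 \<Rightarrow> real \<Rightarrow> real^3" where
  "arc a b s = (let \<theta> = arccos (a \<bullet> b) in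
                (sin ((1 - s) * \<theta>) / sin \<theta>) *\<^sub>R a + (sin (s * \<theta>) / sin \<theta>) *\<^sub>R b)"

definition polygon_curve :: "nat \<Rightarrow> (nat \<Rightarrow> real^3) \<Rightarrow> real \<Rightarrow> real^3" where
  "polygon_curve n V t =
     (let i = nat \<lfloor>t\<rfloor> in arc (V (i mod n)) (V ((i+1) mod n)) (t - of_int \<lfloor>t\<rfloor>))"

text \<open>q : [0,n] \<rightarrow> S^3 is a rolling (with radius ratio \<rho>) along the polygon:
q(0)=1, q continuous, and away from the vertex times (integers) the rolling equations
(\<rho>+1) v' = \<omega> \<times> v, \<omega> \<bullet> v = 0 hold with \<omega> = 2 q' conj(q).\<close>

definition rolling :: "real \<Rightarrow> nat \<Rightarrow> (nat \<Rightarrow> real^3) \<Rightarrow> (real \<Rightarrow> quat) \<Rightarrow> bool" where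
  "rolling \<rho> n V q \<longleftrightarrow>
     q 0 = qone \<and> continuous_on {0..real n} q \<and>
     (\<forall>t\<in>{0..real n}. norm (q t) = 1) \<and>
     (\<forall>t\<in>{0<..<real n}. t \<notin> \<int> \<longrightarrow>
        (\<exists>q' v'. (q has_vector_derivative q') (at t) \<and>
                 (polygon_curve n V has_vector_derivative v') (at t) \<and>
                 (let \<omega> = qmult (2 *\<^sub>R q') (qconj (q t)) in
                    fst \<omega> = 0 \<and>
                    (\<rho> + 1) *\<^sub>R v' = cross3 (snd \<omega>) (polygon_curve n V t) \<and>
                    snd \<omega> \<bullet> polygon_curve n V t = 0)))"

text \<open>The lifted rolling monodromy is the final value q(n); it is trivial if it is 1.
(The rolling q is uniquely determined, so this is well defined.)\<close>

definition trivial_lifted_monodromy :: "real \<Rightarrow> nat \<Rightarrow> (nat \<Rightarrow> real^3) \<Rightarrow> bool" where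
  "trivial_lifted_monodromy \<rho> n V \<longleftrightarrow> (\<exists>q. rolling \<rho> n V q \<and> q (real n) = qone)"

end

theory Submission
  imports Defs
begin

text \<open>
  With radius ratio \<open>\<rho> = 3\<close>, rolling along a great-circle edge of length \<open>\<theta>\<close> is a rotation with
  constant angular velocity \<open>4\<theta> N\<close>, where \<open>N\<close> is the unit axis of the edge, so it multiplies
  the lifted monodromy by the unit quaternion \<open>cos 2\<theta> + sin 2\<theta> N\<close>. An edge of length \<open>\<pi>/2\<close>
  contributes \<open>-1\<close> and an edge of length \<open>3\<pi>/4\<close> contributes \<open>-N\<close>.

  For \<open>n = 2m\<close> take \<open>m\<close> points of a quadratic cone, which are in general position, and let the
  polygon alternate between these points and the poles of the great circles through consecutive
  points. All \<open>n\<close> edges are right angles, so the monodromy is \<open>(-1)\<^sup>n = 1\<close>.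
  For \<open>n = 2L + 5\<close> run such a zigzag with \<open>2L\<close> edges from a point \<open>B\<close> to a point \<open>A\<close> of the cone
  and close it by the five edges \<open>A, -B, X, Y, -A, B\<close>. The first and the last of them have length
  \<open>3\<pi>/4\<close> and the same axis \<open>N\<close>, the three in between are right angles, and the monodromy is
  \<open>(-N) (-1)\<^sup>3 (-N) = -N\<^sup>2 = 1\<close>.
\<close>

section \<open>Quaternions and great-circle arcs\<close>

lemma qmult_assoc: "qmult (qmult p q) r = qmult p (qmult q r)"
  unfolding qmult_def by (auto simp: cross3_simps forall_3)

lemma qmult_qone_left [simp]: "qmult qone p = p"
  and qmult_qone_right [simp]: "qmult p qone = p"
  unfolding qmult_def qone_def by auto

lemma qmult_scaleR_left: "qmult (r *\<^sub>R p) q = r *\<^sub>R qmult p q"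
  unfolding qmult_def by (auto simp: cross_mult_left algebra_simps)

lemma bounded_linear_qmult_left: "bounded_linear (\<lambda>p. qmult p q)"
proof -
  have "linear (\<lambda>p. qmult p q)"
    by (rule linearI)
      (auto simp: qmult_def cross_add_left cross_mult_left algebra_simps)
  then show ?thesis
    by (simp add: linear_conv_bounded_linear)
qed

lemma norm_quat_squared: "(norm (p::quat))\<^sup>2 = (fst p)\<^sup>2 + snd p \<bullet> snd p"
  by (cases p) (simp add: norm_Pair power2_norm_eq_inner)

lemma norm_qmult: "norm (qmult p q) = norm p * norm q"
proof -
  have "(norm (qmult p q))\<^sup>2 = (norm p * norm q)\<^sup>2"
    unfolding power_mult_distrib norm_quat_squared qmult_def
    by (simp add: cross3_simps power2_eq_square)
  then show ?thesis
    by simp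
qed

lemma qmult_qconj_unit:
  assumes "norm p = 1"
  shows "qmult p (qconj p) = qone"
proof -
  have "(fst p)\<^sup>2 + snd p \<bullet> snd p = 1"
    using norm_quat_squared[of p] assms by simp
  then show ?thesis
    by (simp add: qmult_def qconj_def qone_def power2_eq_square)
qed

lemma qmult_unit_qconj_cancel: "norm p = 1 \<Longrightarrow> qmult (qmult w p) (qconj p) = w"
  by (simp add: qmult_assoc qmult_qconj_unit)

text \<open>For a unit vector \<open>N\<close>, \<open>rotor \<phi> N\<close> rotates by the angle \<open>2\<phi>\<close> about \<open>N\<close>.\<close>

definition rotor :: "real \<Rightarrow> real^3 \<Rightarrow> quat" where
  "rotor \<phi> N = (cos \<phi>, sin \<phi> *\<^sub>R N)"

lemma rotor_zero [simp]: "rotor 0 N = qone"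
  by (simp add: rotor_def qone_def)

lemma norm_rotor:
  assumes "N \<bullet> N = 1"
  shows "norm (rotor \<phi> N) = 1"
proof -
  have "(norm (rotor \<phi> N))\<^sup>2 = 1"
    using assms by (simp add: norm_quat_squared rotor_def flip: power2_eq_square)
  then show ?thesis
    using norm_ge_zero[of "rotor \<phi> N"] by (auto simp: power2_eq_1_iff)
qed

lemma rotor_has_vector_derivative:
  assumes "N \<bullet> N = 1"
  shows "((\<lambda>t. rotor (w * (t - c)) N) has_vector_derivative
           qmult (0, w *\<^sub>R N) (rotor (w * (t - c)) N)) (at t)"
proof -
  have "qmult (0, w *\<^sub>R N) (rotor \<phi> N) = (- w * sin \<phi>, (w * cos \<phi>) *\<^sub>R N)" for \<phi>
    using assms by (simp add: qmult_def rotor_def cross_mult_left cross_mult_right)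
  then show ?thesis
    unfolding rotor_def
    by (auto intro!: derivative_eq_intros
        simp: has_real_derivative_iff_has_vector_derivative[symmetric])
qed

lemma arc_has_vector_derivative:
  assumes "sin (arccos (a \<bullet> b)) \<noteq> 0"
  defines "\<theta> \<equiv> arccos (a \<bullet> b)"
  shows "((\<lambda>t. arc a b (t - c)) has_vector_derivative
           (\<theta> / sin \<theta>) *\<^sub>R (cos ((t - c) * \<theta>) *\<^sub>R b - cos ((1 - (t - c)) * \<theta>) *\<^sub>R a)) (at t)"
  unfolding arc_def Let_def \<theta>_def[symmetric] using assms
  by (auto intro!: derivative_eq_intros simp: field_simps \<theta>_def)

lemma cross_inner_arc: "cross3 a b \<bullet> arc a b s = 0"
  unfolding arc_def Let_def by (simp add: inner_add_right dot_cross_self)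

lemma cross_cross_arc:
  assumes "norm a = 1" "norm b = 1" "\<bar>a \<bullet> b\<bar> < 1"
  defines "\<theta> \<equiv> arccos (a \<bullet> b)"
  shows "cross3 (cross3 a b) (arc a b s) = cos (s * \<theta>) *\<^sub>R b - cos ((1 - s) * \<theta>) *\<^sub>R a"
proof -
  have unit: "a \<bullet> a = 1" "b \<bullet> b = 1"
    using assms by (simp_all add: dot_square_norm)
  have cos_\<theta>: "cos \<theta> = a \<bullet> b"
    using assms unfolding \<theta>_def by simp
  have "0 < \<theta>" "\<theta> < pi"
    using assms arccos_lt_bounded unfolding \<theta>_def by auto
  then have sin_\<theta>: "sin \<theta> \<noteq> 0"
    using sin_gt_zero by fastforce
  have "sin (s * \<theta>) = sin \<theta> * cos ((1 - s) * \<theta>) - cos \<theta> * sin ((1 - s) * \<theta>)"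
    using sin_diff[of \<theta> "(1 - s) * \<theta>"] by (simp add: algebra_simps)
  then have b_arc: "b \<bullet> arc a b s = cos ((1 - s) * \<theta>)"
    unfolding arc_def Let_def \<theta>_def[symmetric] using unit cos_\<theta> sin_\<theta>
    by (simp add: inner_add_right field_simps inner_commute)
  have "sin ((1 - s) * \<theta>) = sin \<theta> * cos (s * \<theta>) - cos \<theta> * sin (s * \<theta>)"
    using sin_diff[of \<theta> "s * \<theta>"] by (simp add: algebra_simps)
  then have a_arc: "a \<bullet> arc a b s = cos (s * \<theta>)"
    unfolding arc_def Let_def \<theta>_def[symmetric] using unit cos_\<theta> sin_\<theta>
    by (simp add: inner_add_right field_simps inner_commute)
  have "cross3 (cross3 a b) v = (a \<bullet> v) *\<^sub>R b - (b \<bullet> v) *\<^sub>R a" for v :: "real^3"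
    by (simp add: cross3_simps forall_3)
  then show ?thesis
    by (simp add: a_arc b_arc)
qed

section \<open>Rolling along a polygon of minor arcs\<close>

definition edge_angle :: "(nat \<Rightarrow> real^3) \<Rightarrow> nat \<Rightarrow> nat \<Rightarrow> real" where
  "edge_angle V n i = arccos (V (i mod n) \<bullet> V (Suc i mod n))"

definition edge_axis :: "(nat \<Rightarrow> real^3) \<Rightarrow> nat \<Rightarrow> nat \<Rightarrow> real^3" where
  "edge_axis V n i = (1 / sin (edge_angle V n i)) *\<^sub>R cross3 (V (i mod n)) (V (Suc i mod n))"

definition edge_rotor :: "real \<Rightarrow> (nat \<Rightarrow> real^3) \<Rightarrow> nat \<Rightarrow> nat \<Rightarrow> real \<Rightarrow> quat" where
  "edge_rotor \<rho> V n i s = rotor ((\<rho> + 1) / 2 * edge_angle V n i * s) (edge_axis V n i)"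

fun vertex_rotor :: "real \<Rightarrow> (nat \<Rightarrow> real^3) \<Rightarrow> nat \<Rightarrow> nat \<Rightarrow> quat" where
  "vertex_rotor \<rho> V n 0 = qone"
| "vertex_rotor \<rho> V n (Suc k) = qmult (edge_rotor \<rho> V n k 1) (vertex_rotor \<rho> V n k)"

text \<open>
  On edge \<open>i\<close> the angular velocity is the constant \<open>(\<rho> + 1) \<theta>\<^sub>i N\<^sub>i\<close>, so the rolling is the rotor of
  the part of the current edge already traversed times the rotors of all earlier edges.
\<close>

definition polygon_rolling :: "real \<Rightarrow> (nat \<Rightarrow> real^3) \<Rightarrow> nat \<Rightarrow> real \<Rightarrow> quat" where
  "polygon_rolling \<rho> V n t =
     qmult (edge_rotor \<rho> V n (nat \<lfloor>t\<rfloor>) (frac t)) (vertex_rotor \<rho> V n (nat \<lfloor>t\<rfloor>))"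

locale minor_arc_polygon =
  fixes V :: "nat \<Rightarrow> real^3" and n :: nat
  assumes n_pos: "0 < n"
    and unit_vertex: "\<And>i. i < n \<Longrightarrow> norm (V i) = 1"
    and proper_edge: "\<And>i. i < n \<Longrightarrow> \<bar>V i \<bullet> V (Suc i mod n)\<bar> < 1"
begin

lemma unit_vertex_mod: "norm (V (i mod n)) = 1"
  using unit_vertex n_pos by simp

lemma proper_edge_mod: "\<bar>V (i mod n) \<bullet> V (Suc i mod n)\<bar> < 1"
  using proper_edge[of "i mod n"] n_pos by (simp add: mod_Suc_eq)

lemma edge_angle_bounds: "0 < edge_angle V n i" "edge_angle V n i < pi"
  using proper_edge_mod[of i] arccos_lt_bounded unfolding edge_angle_def by auto

lemma sin_edge_angle_pos: "0 < sin (edge_angle V n i)"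
  using edge_angle_bounds by (simp add: sin_gt_zero)

lemma edge_axis_unit: "edge_axis V n i \<bullet> edge_axis V n i = 1"
proof -
  let ?a = "V (i mod n)" and ?b = "V (Suc i mod n)"
  have "(norm (cross3 ?a ?b))\<^sup>2 + (?a \<bullet> ?b)\<^sup>2 = 1"
    using norm_cross_dot[of ?a ?b] by (simp add: unit_vertex_mod)
  moreover have "cos (edge_angle V n i) = ?a \<bullet> ?b"
    unfolding edge_angle_def using proper_edge_mod[of i] by simp
  ultimately have "(norm (cross3 ?a ?b))\<^sup>2 = (sin (edge_angle V n i))\<^sup>2"
    by (simp add: sin_squared_eq)
  then show ?thesis
    using sin_edge_angle_pos[of i] unfolding edge_axis_def
    by (simp add: power2_norm_eq_inner[symmetric] power2_eq_square)
qed

lemma norm_vertex_rotor: "norm (vertex_rotor \<rho> V n k) = 1"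
  by (induction k) (simp_all add: norm_qmult edge_rotor_def norm_rotor edge_axis_unit qone_def)

lemma polygon_rolling_on_edge:
  assumes "real k \<le> t" "t \<le> real k + 1"
  shows "polygon_rolling \<rho> V n t = qmult (edge_rotor \<rho> V n k (t - real k)) (vertex_rotor \<rho> V n k)"
proof (cases "t = real k + 1")
  case True
  then have "t = real (Suc k)"
    by simp
  then have "nat \<lfloor>t\<rfloor> = Suc k" and "frac t = 0" and "t - real k = 1"
    by simp_all
  then show ?thesis
    unfolding polygon_rolling_def by (simp only:) (simp add: edge_rotor_def)
next
  case False
  then have "\<lfloor>t\<rfloor> = int k"
    using assms by (simp add: floor_eq_iff)
  then have "nat \<lfloor>t\<rfloor> = k" "frac t = t - real k"
    by (simp_all add: frac_def)
  then show ?thesis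
    by (simp add: polygon_rolling_def)
qed

lemma polygon_rolling_vertex: "polygon_rolling \<rho> V n (real k) = vertex_rotor \<rho> V n k"
  using polygon_rolling_on_edge[of k "real k"] by (simp add: edge_rotor_def)

lemma continuous_on_polygon_rolling: "continuous_on {0..real m} (polygon_rolling \<rho> V n)"
proof (induction m)
  case (Suc m)
  have "continuous_on {real m..real m + 1}
          (\<lambda>t. qmult (edge_rotor \<rho> V n m (t - real m)) (vertex_rotor \<rho> V n m))"
    unfolding edge_rotor_def rotor_def
    by (intro bounded_linear.continuous_on[OF bounded_linear_qmult_left] continuous_intros)
  then have "continuous_on {real m..real m + 1} (polygon_rolling \<rho> V n)"
    by (rule continuous_on_eq) (simp add: polygon_rolling_on_edge[symmetric])
  then have "continuous_on ({0..real m} \<union> {real m..real m + 1}) (polygon_rolling \<rho> V n)"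
    using Suc by (intro continuous_on_closed_Un) auto
  moreover have "{0..real m} \<union> {real m..real m + 1} = {0..real (Suc m)}"
    by auto
  ultimately show ?case
    by simp
qed simp

lemma polygon_rolling_has_vector_derivative:
  assumes "t \<in> {real k<..<real k + 1}"
  shows "(polygon_rolling \<rho> V n has_vector_derivative
            qmult (0, ((\<rho> + 1) * edge_angle V n k / 2) *\<^sub>R edge_axis V n k) (polygon_rolling \<rho> V n t))
           (at t)"
proof -
  let ?w = "(\<rho> + 1) * edge_angle V n k / 2" and ?N = "edge_axis V n k"
  have "((\<lambda>t. edge_rotor \<rho> V n k (t - real k)) has_vector_derivative
          qmult (0, ?w *\<^sub>R ?N) (edge_rotor \<rho> V n k (t - real k))) (at t)"
    using rotor_has_vector_derivative[OF edge_axis_unit[of k], of ?w "real k" t]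
    by (simp add: edge_rotor_def mult.commute mult.left_commute)
  then have "((\<lambda>t. qmult (edge_rotor \<rho> V n k (t - real k)) (vertex_rotor \<rho> V n k))
          has_vector_derivative
            qmult (qmult (0, ?w *\<^sub>R ?N) (edge_rotor \<rho> V n k (t - real k))) (vertex_rotor \<rho> V n k))
         (at t)"
    by (rule bounded_linear.has_vector_derivative[OF bounded_linear_qmult_left])
  moreover have "qmult (qmult (0, ?w *\<^sub>R ?N) (edge_rotor \<rho> V n k (t - real k))) (vertex_rotor \<rho> V n k)
      = qmult (0, ?w *\<^sub>R ?N) (polygon_rolling \<rho> V n t)"
    using assms by (simp add: qmult_assoc polygon_rolling_on_edge[symmetric])
  ultimately have "((\<lambda>t. qmult (edge_rotor \<rho> V n k (t - real k)) (vertex_rotor \<rho> V n k))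
      has_vector_derivative qmult (0, ?w *\<^sub>R ?N) (polygon_rolling \<rho> V n t)) (at t)"
    by simp
  then show ?thesis
    by (rule has_vector_derivative_transform_within_open[OF _ open_greaterThanLessThan assms])
      (simp add: polygon_rolling_on_edge[symmetric])
qed

lemma polygon_curve_on_edge:
  assumes "real k \<le> t" "t < real k + 1"
  shows "polygon_curve n V t = arc (V (k mod n)) (V (Suc k mod n)) (t - real k)"
proof -
  have "\<lfloor>t\<rfloor> = int k"
    using assms by (simp add: floor_eq_iff)
  then show ?thesis
    unfolding polygon_curve_def by simp
qed

lemma polygon_curve_has_vector_derivative:
  assumes "t \<in> {real k<..<real k + 1}"
  defines "\<theta> \<equiv> edge_angle V n k"
  shows "(polygon_curve n V has_vector_derivative
            (\<theta> / sin \<theta>) *\<^sub>R (cos ((t - real k) * \<theta>) *\<^sub>R V (Suc k mod n)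
                             - cos ((1 - (t - real k)) * \<theta>) *\<^sub>R V (k mod n))) (at t)"
proof -
  have "sin (arccos (V (k mod n) \<bullet> V (Suc k mod n))) \<noteq> 0"
    using sin_edge_angle_pos[of k] unfolding edge_angle_def by simp
  then have "((\<lambda>t. arc (V (k mod n)) (V (Suc k mod n)) (t - real k)) has_vector_derivative
            (\<theta> / sin \<theta>) *\<^sub>R (cos ((t - real k) * \<theta>) *\<^sub>R V (Suc k mod n)
                             - cos ((1 - (t - real k)) * \<theta>) *\<^sub>R V (k mod n))) (at t)"
    unfolding \<theta>_def edge_angle_def by (rule arc_has_vector_derivative)
  then show ?thesis
    by (rule has_vector_derivative_transform_within_open[OF _ open_greaterThanLessThan assms(1)])
      (simp add: polygon_curve_on_edge[symmetric])
qed

lemma norm_polygon_rolling: "norm (polygon_rolling \<rho> V n t) = 1"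
  by (simp add: polygon_rolling_def norm_qmult norm_vertex_rotor edge_rotor_def norm_rotor
      edge_axis_unit)

lemma polygon_rolling_angular_velocity:
  "qmult (2 *\<^sub>R qmult (0, ((\<rho> + 1) * edge_angle V n k / 2) *\<^sub>R edge_axis V n k) (polygon_rolling \<rho> V n t))
      (qconj (polygon_rolling \<rho> V n t))
   = (0, ((\<rho> + 1) * edge_angle V n k) *\<^sub>R edge_axis V n k)"
  by (simp add: qmult_scaleR_left qmult_unit_qconj_cancel norm_polygon_rolling)

lemma rolling_equations_on_edge:
  fixes \<rho> s :: real and k :: nat
  defines "\<theta> \<equiv> edge_angle V n k" and "a \<equiv> V (k mod n)" and "b \<equiv> V (Suc k mod n)"
    and "\<omega> \<equiv> ((\<rho> + 1) * edge_angle V n k) *\<^sub>R edge_axis V n k"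
  shows "(\<rho> + 1) *\<^sub>R ((\<theta> / sin \<theta>) *\<^sub>R (cos (s * \<theta>) *\<^sub>R b - cos ((1 - s) * \<theta>) *\<^sub>R a))
           = cross3 \<omega> (arc a b s)"
    and "\<omega> \<bullet> arc a b s = 0"
proof -
  have \<omega>: "\<omega> = ((\<rho> + 1) * \<theta> / sin \<theta>) *\<^sub>R cross3 a b"
    by (simp add: \<omega>_def edge_axis_def \<theta>_def a_def b_def)
  show "(\<rho> + 1) *\<^sub>R ((\<theta> / sin \<theta>) *\<^sub>R (cos (s * \<theta>) *\<^sub>R b - cos ((1 - s) * \<theta>) *\<^sub>R a))
      = cross3 \<omega> (arc a b s)"
    using cross_cross_arc[of a b s] unit_vertex_mod proper_edge_mod
    by (simp add: \<omega> cross_mult_left a_def b_def \<theta>_def edge_angle_def)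
  show "\<omega> \<bullet> arc a b s = 0"
    by (simp add: \<omega> cross_inner_arc)
qed

lemma rolling_polygon_rolling: "rolling \<rho> n V (polygon_rolling \<rho> V n)"
  unfolding rolling_def
proof (intro conjI ballI impI)
  show "polygon_rolling \<rho> V n 0 = qone"
    using polygon_rolling_vertex[of \<rho> 0] by simp
  show "continuous_on {0..real n} (polygon_rolling \<rho> V n)"
    by (rule continuous_on_polygon_rolling)
  show "norm (polygon_rolling \<rho> V n t) = 1" for t
    by (rule norm_polygon_rolling)
  fix t
  assume t: "t \<in> {0<..<real n}" "t \<notin> \<int>"
  define k where "k = nat \<lfloor>t\<rfloor>"
  have "\<lfloor>t\<rfloor> = int k"
    using t(1) unfolding k_def by simp
  moreover have "t \<noteq> real k"
    using t(2) by (metis Ints_of_nat)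
  ultimately have edge: "t \<in> {real k<..<real k + 1}"
    by (auto simp: floor_eq_iff)
  let ?\<theta> = "edge_angle V n k" and ?a = "V (k mod n)" and ?b = "V (Suc k mod n)" and ?s = "t - real k"
  show "\<exists>q' v'. (polygon_rolling \<rho> V n has_vector_derivative q') (at t) \<and>
      (polygon_curve n V has_vector_derivative v') (at t) \<and>
      (let \<omega> = qmult (2 *\<^sub>R q') (qconj (polygon_rolling \<rho> V n t))
       in fst \<omega> = 0 \<and> (\<rho> + 1) *\<^sub>R v' = cross3 (snd \<omega>) (polygon_curve n V t) \<and>
          snd \<omega> \<bullet> polygon_curve n V t = 0)"
  proof (intro exI conjI)
    show "(polygon_rolling \<rho> V n has_vector_derivative
        qmult (0, ((\<rho> + 1) * ?\<theta> / 2) *\<^sub>R edge_axis V n k) (polygon_rolling \<rho> V n t)) (at t)"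
      by (rule polygon_rolling_has_vector_derivative[OF edge])
    show "(polygon_curve n V has_vector_derivative
        (?\<theta> / sin ?\<theta>) *\<^sub>R (cos (?s * ?\<theta>) *\<^sub>R ?b - cos ((1 - ?s) * ?\<theta>) *\<^sub>R ?a)) (at t)"
      by (rule polygon_curve_has_vector_derivative[OF edge])
    show "let \<omega> = qmult (2 *\<^sub>R qmult (0, ((\<rho> + 1) * ?\<theta> / 2) *\<^sub>R edge_axis V n k)
                                (polygon_rolling \<rho> V n t)) (qconj (polygon_rolling \<rho> V n t))
       in fst \<omega> = 0 \<and>
          (\<rho> + 1) *\<^sub>R ((?\<theta> / sin ?\<theta>) *\<^sub>R (cos (?s * ?\<theta>) *\<^sub>R ?b - cos ((1 - ?s) * ?\<theta>) *\<^sub>R ?a))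
            = cross3 (snd \<omega>) (polygon_curve n V t) \<and>
          snd \<omega> \<bullet> polygon_curve n V t = 0"
      using edge rolling_equations_on_edge[of \<rho> k ?s] polygon_curve_on_edge[of k t]
      by (simp add: polygon_rolling_angular_velocity)
  qed
qed

lemma trivial_lifted_monodromy_if_vertex_rotor:
  "vertex_rotor \<rho> V n n = qone \<Longrightarrow> trivial_lifted_monodromy \<rho> n V"
  unfolding trivial_lifted_monodromy_def
  by (intro exI[of _ "polygon_rolling \<rho> V n"]) (simp add: rolling_polygon_rolling polygon_rolling_vertex)

end

section \<open>Closed polygons for radius ratio 3\<close>

lemma edge_rotor_right_angle:
  "V (i mod n) \<bullet> V (Suc i mod n) = 0 \<Longrightarrow> edge_rotor 3 V n i 1 = (-1, 0)"
  by (simp add: edge_rotor_def edge_angle_def rotor_def)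

lemma edge_rotor_three_quarter_angle:
  assumes "V (i mod n) \<bullet> V (Suc i mod n) = - (sqrt 2 / 2)"
  shows "edge_rotor 3 V n i 1 = (0, - edge_axis V n i)"
proof -
  have "arccos (sqrt 2 / 2) = pi / 4"
    using arccos_cos[of "pi / 4"] by (simp add: cos_45)
  moreover have "arccos (- (sqrt 2 / 2)) = pi - arccos (sqrt 2 / 2)"
    using sqrt2_less_2 real_sqrt_ge_zero[of 2] by (intro arccos_minus) linarith+
  ultimately have "edge_angle V n i = 3 / 4 * pi"
    using assms by (simp add: edge_angle_def)
  then have \<phi>: "(3 + 1) / 2 * edge_angle V n i * 1 = 3 / 2 * pi"
    by simp
  show ?thesis
    unfolding edge_rotor_def \<phi> rotor_def cos_3over2_pi sin_3over2_pi by simp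
qed

lemma vertex_rotor_right_angles:
  assumes "\<And>i. k \<le> i \<Longrightarrow> i < k + d \<Longrightarrow> V (i mod n) \<bullet> V (Suc i mod n) = 0"
  shows "vertex_rotor 3 V n (k + d) = (-1) ^ d *\<^sub>R vertex_rotor 3 V n k"
  using assms
proof (induction d)
  case (Suc d)
  then show ?case
    by (simp add: edge_rotor_right_angle qmult_def prod_eq_iff)
qed simp

lemma periodic_Suc_mod:
  assumes "\<And>k. V (k mod n) = V k"
  shows "V (Suc (k mod n)) = V (Suc k)"
  by (metis assms mod_Suc_eq)

lemma abs_inner_less_one_if_triple:
  fixes x y z :: "real^3"
  assumes "norm x = 1" "norm y = 1" "x \<bullet> cross3 y z \<noteq> 0"
  shows "\<bar>x \<bullet> y\<bar> < 1"
proof -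
  have "x \<bullet> cross3 y z = z \<bullet> cross3 x y"
    by (simp add: cross3_simps)
  then have "0 < (norm (cross3 x y))\<^sup>2"
    using assms(3) by auto
  moreover have "(norm (cross3 x y))\<^sup>2 + (x \<bullet> y)\<^sup>2 = 1"
    using norm_cross_dot[of x y] assms(1,2) by simp
  ultimately have "(x \<bullet> y)\<^sup>2 < 1"
    by linarith
  then show ?thesis
    by (simp add: abs_square_less_1)
qed

lemma minor_arc_polygon_if_nondegenerate:
  assumes "0 < n"
    and periodic: "\<And>k. V (k mod n) = V k"
    and unit: "\<And>k. norm (V k) = 1"
    and nondegenerate: "\<And>k. k < n \<Longrightarrow> V k \<bullet> cross3 (V (Suc k)) (V (Suc (Suc k))) \<noteq> 0"
  shows "minor_arc_polygon V n"
proof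
  fix i
  assume "i < n"
  then show "\<bar>V i \<bullet> V (Suc i mod n)\<bar> < 1"
    using abs_inner_less_one_if_triple[OF unit unit nondegenerate] by (simp add: periodic)
qed (use assms in auto)

lemma nondegenerate_polygon_if_periodic:
  assumes periodic: "\<And>k. V (k mod n) = V k"
    and nondegenerate: "\<And>k. k < n \<Longrightarrow> V k \<bullet> cross3 (V (Suc k)) (V (Suc (Suc k))) \<noteq> 0"
  shows "nondegenerate_polygon n V"
  unfolding nondegenerate_polygon_def using nondegenerate by (simp add: periodic)

section \<open>Zigzag polygons\<close>

lemma scaleR_norm_sgn: "norm x *\<^sub>R sgn x = x"
  by (cases "x = 0") (simp_all add: sgn_div_norm)

lemma sgn_eq_imp_cross_eq_0:
  fixes x y :: "real^3"
  assumes "sgn x = sgn y"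
  shows "cross3 x y = 0"
proof -
  have "cross3 x y = (norm x * norm y) *\<^sub>R cross3 (sgn x) (sgn y)"
    by (metis cross_mult_left cross_mult_right scaleR_norm_sgn scaleR_scaleR)
  then show ?thesis
    using assms by simp
qed

lemma sgn_eq_imp_inner_eq_0:
  fixes x w y :: "real^3"
  assumes "sgn x = sgn w" "w \<bullet> y = 0"
  shows "x \<bullet> y = 0"
proof -
  have "x \<bullet> y = norm x * (sgn w \<bullet> y)"
    by (metis assms(1) inner_scaleR_left scaleR_norm_sgn)
  then show ?thesis
    using assms(2) by (simp add: sgn_div_norm)
qed

lemma inner_sgn_eq_0: "x \<bullet> y = 0 \<Longrightarrow> sgn x \<bullet> sgn y = 0"
  by (simp add: sgn_div_norm)

lemma sgn_sgn_nth: "sgn (sgn v $ i) = sgn (v $ i)"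
  by (cases "v = 0") (simp_all add: sgn_div_norm divide_inverse mult.commute)

lemma triple_sgn_neq_0:
  fixes x y z :: "real^3"
  assumes "x \<bullet> cross3 y z \<noteq> 0"
  shows "sgn x \<bullet> cross3 (sgn y) (sgn z) \<noteq> 0"
proof -
  have "x \<noteq> 0" "y \<noteq> 0" "z \<noteq> 0"
    using assms by auto
  then show ?thesis
    using assms by (simp add: sgn_div_norm cross_mult_left cross_mult_right)
qed

lemma sgn_neq_sgn_cross:
  fixes x y z :: "real^3"
  assumes "x \<bullet> y \<noteq> 0"
  shows "sgn x \<noteq> sgn (cross3 y z)"
proof
  assume "sgn x = sgn (cross3 y z)"
  then have "x \<bullet> y = 0"
    by (rule sgn_eq_imp_inner_eq_0) (simp add: dot_cross_self)
  with assms show False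
    by simp
qed

text \<open>
  The vertices alternate between the points \<open>F j\<close> and the poles \<open>F j \<times> F (j + 1)\<close> of the great
  circles through consecutive points, so that every edge is a right angle.
\<close>

definition zigzag :: "(nat \<Rightarrow> real^3) \<Rightarrow> nat \<Rightarrow> real^3" where
  "zigzag F k = sgn (if even k then F (k div 2) else cross3 (F (k div 2)) (F (Suc (k div 2))))"

lemma zigzag_even [simp]: "zigzag F (2 * j) = sgn (F j)"
  by (simp add: zigzag_def)

lemma zigzag_odd [simp]: "zigzag F (Suc (2 * j)) = sgn (cross3 (F j) (F (Suc j)))"
  by (simp add: zigzag_def)

lemma zigzag_even_Suc_Suc [simp]: "zigzag F (Suc (Suc (2 * j))) = sgn (F (Suc j))"
  using zigzag_even[of F "Suc j"] by simp

lemma zigzag_orthogonal: "zigzag F k \<bullet> zigzag F (Suc k) = 0"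
proof (cases "even k")
  case True
  then obtain j where "k = 2 * j"
    by (rule evenE)
  then show ?thesis
    by (simp add: inner_sgn_eq_0 dot_cross_self)
next
  case False
  then obtain j where "k = Suc (2 * j)"
    by (auto elim: oddE)
  then show ?thesis
    by (simp add: inner_sgn_eq_0 dot_cross_self)
qed

lemma zigzag_mod:
  assumes periodic: "\<And>j. F (j mod m) = F j"
  shows "zigzag F (k mod (2 * m)) = zigzag F k"
proof -
  have "k mod (2 * m) = 2 * (k div 2 mod m) + k mod 2"
    by (simp add: mod_mult2_eq)
  then show ?thesis
    by (simp add: zigzag_def periodic periodic_Suc_mod[of F, OF periodic])
qed

definition general_position_mod :: "nat \<Rightarrow> (nat \<Rightarrow> real^3) \<Rightarrow> bool" where
  "general_position_mod m F \<longleftrightarrow>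
     (\<forall>i j l. i mod m \<noteq> j mod m \<longrightarrow> i mod m \<noteq> l mod m \<longrightarrow> j mod m \<noteq> l mod m \<longrightarrow>
        F i \<bullet> cross3 (F j) (F l) \<noteq> 0)"

context
  fixes m :: nat and F :: "nat \<Rightarrow> real^3"
  assumes general_position: "general_position_mod m F"
    and three_le: "3 \<le> m"
begin

lemma general_position_triple:
  "i mod m \<noteq> j mod m \<Longrightarrow> i mod m \<noteq> l mod m \<Longrightarrow> j mod m \<noteq> l mod m \<Longrightarrow>
     F i \<bullet> cross3 (F j) (F l) \<noteq> 0"
  using general_position unfolding general_position_mod_def by blast

lemma consecutive_mod_distinct:
  "j mod m \<noteq> Suc j mod m" "j mod m \<noteq> Suc (Suc j) mod m" "Suc j mod m \<noteq> Suc (Suc j) mod m"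
  using three_le by (auto simp: mod_Suc)

lemma consecutive_triple: "F j \<bullet> cross3 (F (Suc j)) (F (Suc (Suc j))) \<noteq> 0"
  by (rule general_position_triple) (use consecutive_mod_distinct in auto)

lemma consecutive_nonzero: "F j \<noteq> 0" "cross3 (F j) (F (Suc j)) \<noteq> 0"
proof -
  have "F (Suc (Suc j)) \<bullet> cross3 (F j) (F (Suc j)) \<noteq> 0"
    using consecutive_triple[of j] by (simp add: cross3_simps)
  then show "F j \<noteq> 0" "cross3 (F j) (F (Suc j)) \<noteq> 0"
    by auto
qed

lemma norm_zigzag: "norm (zigzag F k) = 1"
  using consecutive_nonzero[of "k div 2"] by (simp add: zigzag_def norm_sgn)

lemma zigzag_triple:
  "zigzag F k \<bullet> cross3 (zigzag F (Suc k)) (zigzag F (Suc (Suc k))) \<noteq> 0"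
proof (cases "even k")
  case True
  then obtain j where k: "k = 2 * j"
    by auto
  have "F j \<bullet> cross3 (cross3 (F j) (F (Suc j))) (F (Suc j))
      = - (cross3 (F j) (F (Suc j)) \<bullet> cross3 (F j) (F (Suc j)))"
    by (simp add: cross3_simps)
  then show ?thesis
    using consecutive_nonzero(2)[of j] by (simp add: k triple_sgn_neq_0)
next
  case False
  then obtain j where k: "k = Suc (2 * j)"
    by (auto elim: oddE)
  have "zigzag F (Suc (Suc k)) = sgn (cross3 (F (Suc j)) (F (Suc (Suc j))))"
    using zigzag_odd[of F "Suc j"] by (simp add: k)
  moreover have "cross3 (F j) (F (Suc j)) \<bullet> cross3 (F (Suc j)) (cross3 (F (Suc j)) (F (Suc (Suc j))))
      = - (F (Suc j) \<bullet> F (Suc j)) * (F j \<bullet> cross3 (F (Suc j)) (F (Suc (Suc j))))"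
    by (simp add: cross3_simps)
  ultimately show ?thesis
    using consecutive_nonzero(1)[of "Suc j"] consecutive_triple[of j] by (simp add: k triple_sgn_neq_0)
qed

lemma sgn_neq_if_general_position:
  assumes "i mod m \<noteq> j mod m"
  shows "sgn (F i) \<noteq> sgn (F j)"
proof
  assume "sgn (F i) = sgn (F j)"
  then have "F l \<bullet> cross3 (F i) (F j) = 0" for l
    by (simp add: sgn_eq_imp_cross_eq_0)
  moreover have "\<exists>l::nat. l < 3 \<and> l \<noteq> a \<and> l \<noteq> b" for a b
    by presburger
  then obtain l :: nat where "l < 3" "l \<noteq> i mod m" "l \<noteq> j mod m"
    by blast
  ultimately show False
    using general_position_triple[of l i j] assms three_le by simp
qed

lemma sgn_cross_neq_if_general_position:
  assumes "i mod m \<noteq> j mod m"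
  shows "sgn (cross3 (F i) (F (Suc i))) \<noteq> sgn (cross3 (F j) (F (Suc j)))"
proof
  assume same: "sgn (cross3 (F i) (F (Suc i))) = sgn (cross3 (F j) (F (Suc j)))"
  have orthogonal: "F i \<bullet> cross3 (F (Suc i)) (F l) = 0" if "l = j \<or> l = Suc j" for l
  proof -
    have "cross3 (F j) (F (Suc j)) \<bullet> F l = 0"
      using that by (auto simp: dot_cross_self)
    then have "cross3 (F i) (F (Suc i)) \<bullet> F l = 0"
      by (rule sgn_eq_imp_inner_eq_0[OF same])
    then show ?thesis
      by (simp add: cross3_simps)
  qed
  show False
  proof (cases "j mod m = Suc i mod m")
    case True
    then have "Suc j mod m = Suc (Suc i) mod m"
      by (metis mod_Suc_eq)
    then show False
      using general_position_triple[of i "Suc i" "Suc j"] consecutive_mod_distinct[of i] orthogonal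
      by simp
  next
    case False
    then show False
      using general_position_triple[of i "Suc i" j] consecutive_mod_distinct[of i] orthogonal assms
      by simp
  qed
qed

lemma inj_on_zigzag:
  assumes "\<And>i j. F i \<bullet> F j \<noteq> 0"
  shows "inj_on (zigzag F) {..<2 * m}"
proof (rule inj_onI)
  fix x y
  assume "x \<in> {..<2 * m}" "y \<in> {..<2 * m}" and same: "zigzag F x = zigzag F y"
  define i a j b where "i = x div 2" and "a = x mod 2" and "j = y div 2" and "b = y mod 2"
  have x: "x = 2 * i + a" "a < 2" and y: "y = 2 * j + b" "b < 2"
    unfolding i_def a_def j_def b_def by simp_all
  moreover have "i < m" "j < m"
    using \<open>x \<in> {..<2 * m}\<close> \<open>y \<in> {..<2 * m}\<close> unfolding i_def j_def by auto
  ultimately have mod_m: "i mod m = i" "j mod m = j"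
    and eq: "zigzag F (2 * i + a) = zigzag F (2 * j + b)"
    using same by simp_all
  consider "a = 0" "b = 0" | "a = 0" "b = 1" | "a = 1" "b = 0" | "a = 1" "b = 1"
    using x(2) y(2) by linarith
  then show "x = y"
  proof cases
    case 1
    then have "sgn (F i) = sgn (F j)"
      using eq by simp
    then show ?thesis
      using sgn_neq_if_general_position[of i j] mod_m x y 1 by auto
  next
    case 2
    then have "sgn (F i) = sgn (cross3 (F j) (F (Suc j)))"
      using eq by simp
    then show ?thesis
      using sgn_neq_sgn_cross[OF assms] by blast
  next
    case 3
    then have "sgn (F j) = sgn (cross3 (F i) (F (Suc i)))"
      using eq by simp
    then show ?thesis
      using sgn_neq_sgn_cross[OF assms] by blast
  next
    case 4
    then have "sgn (cross3 (F i) (F (Suc i))) = sgn (cross3 (F j) (F (Suc j)))"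
      using eq by simp
    then show ?thesis
      using sgn_cross_neq_if_general_position[of i j] mod_m x y 4 by auto
  qed
qed

end

section \<open>Points of a quadratic cone\<close>

text \<open>
  These vectors lie on the quadratic cone \<open>x\<^sub>2\<^sup>2 = x\<^sub>1 (x\<^sub>2 - x\<^sub>3)\<close>, with \<open>conic_infinity\<close> the limit
  direction of \<open>conic_point s\<close> as \<open>s \<rightarrow> \<infinity>\<close>; distinct lines of such a cone are linearly
  independent.
\<close>

definition conic_point :: "real \<Rightarrow> real^3" where
  "conic_point s = vector [s\<^sup>2, s, s - 1]"

definition conic_infinity :: "real^3" where
  "conic_infinity = vector [1, 0, 0]"

lemma conic_point_nonzero: "conic_point s \<noteq> 0"
  by (simp add: conic_point_def vec_eq_iff forall_3)

lemma triple_conic_points: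
  "conic_point s \<bullet> cross3 (conic_point t) (conic_point u) = (s - t) * (t - u) * (u - s)"
  unfolding conic_point_def by (simp add: cross3_simps power2_eq_square)

lemma triple_conic_points_infinity:
  "conic_point s \<bullet> cross3 (conic_point t) conic_infinity = t - s"
  unfolding conic_point_def conic_infinity_def by (simp add: cross3_simps)

lemma inner_conic_points_pos:
  assumes "1 \<le> s" "1 \<le> t"
  shows "0 < conic_point s \<bullet> conic_point t"
proof -
  have "conic_point s \<bullet> conic_point t = s\<^sup>2 * t\<^sup>2 + s * t + (s - 1) * (t - 1)"
    unfolding conic_point_def by (simp add: cross3_simps power2_eq_square)
  moreover have "0 \<le> s\<^sup>2 * t\<^sup>2" "0 < s * t" "0 \<le> (s - 1) * (t - 1)"
    using assms by simp_all
  ultimately show ?thesis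
    by linarith
qed

lemma inner_conic_point_infinity: "conic_point s \<bullet> conic_infinity = s\<^sup>2"
  unfolding conic_point_def conic_infinity_def by (simp add: cross3_simps)

lemma cross_conic_points_nth_3: "cross3 (conic_point s) (conic_point t) $ 3 = s * t * (s - t)"
  unfolding conic_point_def by (simp add: cross3_simps power2_eq_square)

lemma cross_conic_point_infinity_nth_3: "cross3 (conic_point s) conic_infinity $ 3 = - s"
  unfolding conic_point_def conic_infinity_def by (simp add: cross3_simps)

section \<open>Polygons with an even number of vertices\<close>

definition conic_cycle :: "nat \<Rightarrow> nat \<Rightarrow> real^3" where
  "conic_cycle m j = conic_point (real (j mod m) + 1)"

lemma general_position_conic_cycle: "general_position_mod m (conic_cycle m)"
  unfolding general_position_mod_def conic_cycle_def triple_conic_points by simp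

lemma zigzag_conic_cycle_trivial_monodromy:
  assumes "3 \<le> m"
  defines "V \<equiv> zigzag (conic_cycle m)"
  shows "spherical_polygon (2 * m) V \<and> nondegenerate_polygon (2 * m) V \<and>
         trivial_lifted_monodromy 3 (2 * m) V"
proof -
  note general_position = general_position_conic_cycle[of m]
  have periodic: "V (k mod (2 * m)) = V k" for k
    unfolding V_def by (rule zigzag_mod) (simp add: conic_cycle_def)
  have unit: "norm (V k) = 1" for k
    unfolding V_def using general_position assms(1) by (rule norm_zigzag)
  have nondegenerate: "V k \<bullet> cross3 (V (Suc k)) (V (Suc (Suc k))) \<noteq> 0" for k
    unfolding V_def using general_position assms(1) by (rule zigzag_triple)
  have "inj_on V {..<2 * m}"
    unfolding V_def using general_position assms(1)
  proof (rule inj_on_zigzag)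
    show "conic_cycle m i \<bullet> conic_cycle m j \<noteq> 0" for i j
      using inner_conic_points_pos by (simp add: conic_cycle_def less_imp_neq[THEN not_sym])
  qed
  moreover interpret minor_arc_polygon V "2 * m"
    using assms(1) periodic unit nondegenerate by (intro minor_arc_polygon_if_nondegenerate) auto
  have "vertex_rotor 3 V (2 * m) (0 + 2 * m) = (-1) ^ (2 * m) *\<^sub>R vertex_rotor 3 V (2 * m) 0"
    using zigzag_orthogonal[of "conic_cycle m"] unfolding V_def[symmetric]
    by (intro vertex_rotor_right_angles) (simp add: periodic periodic_Suc_mod[of V, OF periodic])
  then have "trivial_lifted_monodromy 3 (2 * m) V"
    by (intro trivial_lifted_monodromy_if_vertex_rotor) (simp add: qone_def)
  ultimately show ?thesis
    using assms(1) unit periodic nondegenerate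
    by (simp add: spherical_polygon_def nondegenerate_polygon_if_periodic)
qed

section \<open>Polygons with an odd number of vertices\<close>

definition conic_path :: "nat \<Rightarrow> nat \<Rightarrow> real^3" where
  "conic_path L j = (if j = L then conic_infinity else conic_point (real j + 1))"

lemma triple_conic_path:
  assumes "i \<noteq> j" "i \<noteq> l" "j \<noteq> l"
  shows "conic_path L i \<bullet> cross3 (conic_path L j) (conic_path L l) \<noteq> 0"
proof -
  have rotate: "x \<bullet> cross3 y z = y \<bullet> cross3 z x" for x y z :: "real^3"
    by (simp add: cross3_simps)
  consider "i = L" | "j = L" | "l = L" | "i \<noteq> L" "j \<noteq> L" "l \<noteq> L"
    by blast
  then show ?thesis
  proof cases
    case 1
    then show ?thesis
      using assms rotate[of conic_infinity]
      by (simp add: conic_path_def triple_conic_points_infinity)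
  next
    case 2
    then show ?thesis
      using assms rotate[of _ conic_infinity] rotate[of conic_infinity]
      by (simp add: conic_path_def triple_conic_points_infinity)
  next
    case 3
    then show ?thesis
      using assms by (simp add: conic_path_def triple_conic_points_infinity)
  next
    case 4
    then show ?thesis
      using assms by (simp add: conic_path_def triple_conic_points)
  qed
qed

lemma general_position_conic_path: "general_position_mod m (conic_path L)"
  unfolding general_position_mod_def using triple_conic_path by metis

lemma inner_conic_path_pos: "0 < conic_path L i \<bullet> conic_path L j"
  using inner_conic_points_pos[of "real i + 1" "real j + 1"] inner_conic_point_infinity
  by (auto simp: conic_path_def conic_infinity_def inner_commute[of conic_infinity] cross3_simps)

lemma cross_conic_path_nth_3:
  assumes "j < L"
  shows "cross3 (conic_path L j) (conic_path L (Suc j)) $ 3 < 0"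
proof (cases "Suc j = L")
  case True
  then show ?thesis
    using assms by (simp add: conic_path_def cross_conic_point_infinity_nth_3)
next
  case False
  then show ?thesis
    using assms by (simp add: conic_path_def cross_conic_points_nth_3)
qed

text \<open>
  The edges from \<open>conic_infinity\<close> to \<open>-conic_point 1\<close> and from \<open>-conic_infinity\<close> to
  \<open>conic_point 1\<close> (the start of the zigzag) have length \<open>3\<pi>/4\<close> and the same axis; \<open>X = (1, -1, 1)\<close>
  and \<open>Y = (0, 1, 1)\<close> make the three edges between them right angles.
\<close>

definition odd_gadget :: "(real^3) list" where
  "odd_gadget = [conic_infinity, - conic_point 1, vector [1, -1, 1], vector [0, 1, 1], - conic_infinity]"

definition odd_polygon :: "nat \<Rightarrow> nat \<Rightarrow> real^3" where
  "odd_polygon L k = (let i = k mod (2 * L + 5) in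
     if i < 2 * L then zigzag (conic_path L) i else sgn (odd_gadget ! (i - 2 * L)))"

lemma odd_polygon_mod: "odd_polygon L (k mod (2 * L + 5)) = odd_polygon L k"
  by (simp add: odd_polygon_def)

lemma odd_polygon_zigzag: "k \<le> 2 * L \<Longrightarrow> odd_polygon L k = zigzag (conic_path L) k"
  by (cases "k = 2 * L") (simp_all add: odd_polygon_def odd_gadget_def conic_path_def)

lemma odd_polygon_gadget: "i < 5 \<Longrightarrow> odd_polygon L (2 * L + i) = sgn (odd_gadget ! i)"
  by (simp add: odd_polygon_def)

lemma norm_odd_polygon: "norm (odd_polygon L k) = 1"
proof -
  have "g \<noteq> 0" if "g \<in> set odd_gadget" for g
    using that conic_point_nonzero by (auto simp: odd_gadget_def conic_infinity_def vec_eq_iff forall_3)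
  moreover have "length odd_gadget = 5"
    by (simp add: odd_gadget_def)
  ultimately have "norm (sgn (odd_gadget ! i)) = 1" if "i < 5" for i
    using that nth_mem[of i odd_gadget] by (simp add: norm_sgn)
  moreover have "norm (zigzag (conic_path L) k) = 1" for k
    using norm_zigzag[OF general_position_conic_path[of 3 L]] by simp
  moreover have "k mod (2 * L + 5) - 2 * L < 5"
    using mod_less_divisor[of "2 * L + 5" k] by linarith
  ultimately show ?thesis
    by (simp add: odd_polygon_def Let_def)
qed

lemma odd_polygon_path_signs:
  assumes "k < 2 * L"
  shows "sgn (odd_polygon L k $ 1) = 1 \<and> sgn (odd_polygon L k $ 2) = 1 \<or> sgn (odd_polygon L k $ 3) = -1"
proof (cases "even k")
  case True
  then obtain j where "k = 2 * j" "j < L"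
    using assms by (auto elim: evenE)
  then show ?thesis
    by (simp add: odd_polygon_zigzag sgn_sgn_nth conic_path_def conic_point_def)
next
  case False
  then obtain j where "k = Suc (2 * j)" "j < L"
    using assms by (auto elim: oddE)
  then show ?thesis
    using cross_conic_path_nth_3[of j L] by (simp add: odd_polygon_zigzag sgn_sgn_nth)
qed

lemma odd_polygon_gadget_signs:
  assumes "i < 5"
  shows "(sgn (odd_polygon L (2 * L + i) $ 1), sgn (odd_polygon L (2 * L + i) $ 2),
          sgn (odd_polygon L (2 * L + i) $ 3))
         = [(1, 0, 0), (-1, -1, 0), (1, -1, 1), (0, 1, 1), (-1, 0, 0)] ! i"
proof -
  have "i = 0 \<or> i = 1 \<or> i = 2 \<or> i = 3 \<or> i = 4"
    using assms by linarith
  then show ?thesis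
    unfolding odd_polygon_gadget[OF assms] sgn_sgn_nth
    by (elim disjE) (simp_all add: odd_gadget_def conic_point_def conic_infinity_def)
qed

lemma inj_on_odd_polygon_path: "inj_on (odd_polygon L) {..<2 * L}"
proof -
  \<comment> \<open>\<open>conic_path L\<close> is in general position modulo every \<open>m\<close>; \<open>m = L + 3\<close> covers \<open>{..<2 * L}\<close>.\<close>
  have "inj_on (zigzag (conic_path L)) {..<2 * (L + 3)}"
    using general_position_conic_path
    by (rule inj_on_zigzag) (simp_all add: less_imp_neq[OF inner_conic_path_pos, THEN not_sym])
  then have "inj_on (zigzag (conic_path L)) {..<2 * L}"
    by (rule inj_on_subset) auto
  then show ?thesis
    by (rule inj_on_cong[THEN iffD1, rotated]) (simp add: odd_polygon_zigzag)
qed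

lemma inj_on_odd_polygon: "inj_on (odd_polygon L) {..<2 * L + 5}"
proof -
  let ?V = "odd_polygon L" and ?shift = "\<lambda>i. 2 * L + i"
  let ?signs = "\<lambda>v :: real^3. (sgn (v $ 1), sgn (v $ 2), sgn (v $ 3))"
  have "x \<in> ?shift ` {..<5}" if "x \<in> {2 * L..<2 * L + 5}" for x
    using that by (intro image_eqI[of _ _ "x - 2 * L"]) auto
  then have gadget: "{2 * L..<2 * L + 5} = ?shift ` {..<5}"
    by auto
  have "inj_on (?signs \<circ> (?V \<circ> ?shift)) {..<5}"
    by (rule inj_onI) (simp add: odd_polygon_gadget_signs nth_eq_iff_index_eq)
  then have "inj_on (?V \<circ> ?shift) {..<5}"
    by (rule inj_on_imageI2)
  then have "inj_on ?V {2 * L..<2 * L + 5}"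
    unfolding gadget by (rule inj_on_imageI)
  moreover have "?V x \<noteq> ?V (2 * L + i)" if "x < 2 * L" "i < 5" for x i
  proof
    assume "?V x = ?V (2 * L + i)"
    then have "?signs (?V x) = [(1, 0, 0), (-1, -1, 0), (1, -1, 1), (0, 1, 1), (-1, 0, 0)] ! i"
      using odd_polygon_gadget_signs[OF that(2)] by simp
    moreover have "i = 0 \<or> i = 1 \<or> i = 2 \<or> i = 3 \<or> i = 4"
      using that(2) by linarith
    ultimately show False
      using odd_polygon_path_signs[OF that(1)] by (elim disjE) auto
  qed
  then have "?V ` {..<2 * L} \<inter> ?V ` {2 * L..<2 * L + 5} = {}"
    unfolding gadget by fastforce
  moreover have "{..<2 * L} - {2 * L..<2 * L + 5} = {..<2 * L}"
    "{2 * L..<2 * L + 5} - {..<2 * L} = {2 * L..<2 * L + 5}"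
    "{..<2 * L} \<union> {2 * L..<2 * L + 5} = {..<2 * L + 5}"
    by auto
  ultimately show ?thesis
    using inj_on_Un[of ?V "{..<2 * L}" "{2 * L..<2 * L + 5}"] inj_on_odd_polygon_path by simp
qed

lemma inner_sgn_conic_infinity_conic_point_1: "sgn conic_infinity \<bullet> sgn (conic_point 1) = sqrt 2 / 2"
proof -
  have "norm conic_infinity = 1" "norm (conic_point 1) = sqrt 2" "conic_infinity \<bullet> conic_point 1 = 1"
    by (simp_all add: conic_infinity_def conic_point_def norm_eq_sqrt_inner cross3_simps)
  then show ?thesis
    by (simp add: sgn_div_norm field_simps)
qed

context
  fixes L :: nat
  assumes L_pos: "1 \<le> L"
begin

lemma odd_polygon_window:
  assumes "i < 7"
  shows "odd_polygon L (2 * L + i)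
    = sgn ((odd_gadget @ [conic_point 1, cross3 (conic_point 1) (conic_path L 1)]) ! i)"
proof (cases "i < 5")
  case True
  moreover have "length odd_gadget = 5"
    by (simp add: odd_gadget_def)
  ultimately show ?thesis
    by (simp add: odd_polygon_gadget nth_append)
next
  case False
  then have "odd_polygon L (2 * L + i) = odd_polygon L (i - 5)"
    using odd_polygon_mod[of L "2 * L + i"] odd_polygon_mod[of L "i - 5"] assms
    by (simp add: le_mod_geq)
  moreover have "i = 5 \<or> i = 6"
    using False assms by linarith
  ultimately show ?thesis
    using L_pos by (auto simp: odd_polygon_zigzag zigzag_def conic_path_def odd_gadget_def)
qed

lemma odd_polygon_gadget_triple:
  assumes "i < 5"
  shows "odd_polygon L (2 * L + i) \<bullet>
           cross3 (odd_polygon L (2 * L + Suc i)) (odd_polygon L (2 * L + Suc (Suc i))) \<noteq> 0"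
proof -
  let ?W = "odd_gadget @ [conic_point 1, cross3 (conic_point 1) (conic_path L 1)]"
  have "i = 0 \<or> i = 1 \<or> i = 2 \<or> i = 3 \<or> i = 4"
    using assms by linarith
  moreover have "cross3 (conic_point 1) (conic_path L 1) $ 3 \<noteq> 0"
    using cross_conic_path_nth_3[of 0 L] L_pos by (simp add: conic_path_def)
  ultimately have "?W ! i \<bullet> cross3 (?W ! Suc i) (?W ! Suc (Suc i)) \<noteq> 0"
    by (elim disjE) (simp_all add: odd_gadget_def conic_point_def conic_infinity_def cross3_simps)
  moreover have "i < 7" "Suc i < 7" "Suc (Suc i) < 7"
    using assms by simp_all
  ultimately show ?thesis
    by (simp only: odd_polygon_window) (rule triple_sgn_neq_0)
qed

lemma odd_polygon_triple:
  assumes "k < 2 * L + 5"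
  shows "odd_polygon L k \<bullet> cross3 (odd_polygon L (Suc k)) (odd_polygon L (Suc (Suc k))) \<noteq> 0"
proof -
  have "Suc (Suc k) \<le> 2 * L \<or> Suc k = 2 * L \<or> 2 * L \<le> k"
    by linarith
  then consider (path) "Suc (Suc k) \<le> 2 * L" | (last) "Suc k = 2 * L" | (gadget) "2 * L \<le> k"
    by blast
  then show ?thesis
  proof cases
    case path
    then show ?thesis
      using zigzag_triple[OF general_position_conic_path, of 3 L k] by (simp add: odd_polygon_zigzag)
  next
    case last
    define j where "j = L - 1"
    have j: "k = Suc (2 * j)" "Suc j = L"
      using last L_pos unfolding j_def by arith+
    have "odd_polygon L k = sgn (cross3 (conic_path L j) (conic_path L L))"
      "odd_polygon L (Suc k) = sgn conic_infinity"
      using j odd_polygon_zigzag[of k L] odd_polygon_zigzag[of "Suc k" L] by (simp_all add: conic_path_def)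
    moreover have "odd_polygon L (Suc (Suc k)) = sgn (- conic_point 1)"
      using last odd_polygon_gadget[of 1 L] by (simp add: odd_gadget_def)
    moreover have "v \<bullet> cross3 conic_infinity (- conic_point 1) = - v $ 3" for v
      by (simp add: conic_infinity_def conic_point_def cross3_simps)
    ultimately show ?thesis
      using cross_conic_path_nth_3[of j L] j by (simp only:) (intro triple_sgn_neq_0, simp)
  next
    case gadget
    define i where "i = k - 2 * L"
    have "i < 5" "k = 2 * L + i"
      using gadget assms unfolding i_def by simp_all
    then show ?thesis
      using odd_polygon_gadget_triple[of i] by simp
  qed
qed

lemma odd_polygon_right_angle:
  assumes "k < 2 * L + 5" "k \<noteq> 2 * L" "k \<noteq> 2 * L + 4"
  shows "odd_polygon L k \<bullet> odd_polygon L (Suc k) = 0"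
proof (cases "k < 2 * L")
  case True
  then show ?thesis
    using zigzag_orthogonal by (simp add: odd_polygon_zigzag)
next
  case False
  let ?W = "odd_gadget @ [conic_point 1, cross3 (conic_point 1) (conic_path L 1)]"
  define i where "i = k - 2 * L"
  have i: "k = 2 * L + i" "i = 1 \<or> i = 2 \<or> i = 3"
    using assms False unfolding i_def by arith+
  then have "?W ! i \<bullet> ?W ! Suc i = 0"
    by (elim disjE) (simp_all add: odd_gadget_def conic_point_def conic_infinity_def inner_vec_def sum_3)
  moreover have "i < 7" "Suc i < 7"
    using i(2) by auto
  ultimately show ?thesis
    unfolding i(1) add_Suc_right[symmetric] by (simp only: odd_polygon_window inner_sgn_eq_0)
qed

lemma odd_polygon_three_quarter_angle:
  assumes "i = 0 \<or> i = 4"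
  shows "odd_polygon L (2 * L + i) \<bullet> odd_polygon L (2 * L + Suc i) = - (sqrt 2 / 2)"
proof -
  have "i < 7" "Suc i < 7"
    using assms by auto
  then have "odd_polygon L (2 * L + i) \<bullet> odd_polygon L (2 * L + Suc i)
      = sgn ((odd_gadget @ [conic_point 1, cross3 (conic_point 1) (conic_path L 1)]) ! i) \<bullet>
        sgn ((odd_gadget @ [conic_point 1, cross3 (conic_point 1) (conic_path L 1)]) ! Suc i)"
    by (simp only: odd_polygon_window)
  also have "\<dots> = - (sqrt 2 / 2)"
    using assms inner_sgn_conic_infinity_conic_point_1 by (auto simp: odd_gadget_def sgn_minus)
  finally show ?thesis .
qed

lemma minor_arc_odd_polygon: "minor_arc_polygon (odd_polygon L) (2 * L + 5)"
  using odd_polygon_triple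
  by (intro minor_arc_polygon_if_nondegenerate) (simp_all add: odd_polygon_mod norm_odd_polygon)

lemma odd_polygon_vertex_rotor: "vertex_rotor 3 (odd_polygon L) (2 * L + 5) (2 * L + 5) = qone"
proof -
  let ?V = "odd_polygon L" and ?n = "2 * L + 5"
  interpret minor_arc_polygon ?V ?n
    by (rule minor_arc_odd_polygon)
  have three_quarter: "?V (i mod ?n) \<bullet> ?V (Suc i mod ?n) = - (sqrt 2 / 2)"
    if "i = 2 * L \<or> i = 2 * L + 4" for i
    using that odd_polygon_three_quarter_angle[of 0] odd_polygon_three_quarter_angle[of 4]
    by (simp only: odd_polygon_mod) (auto simp: ac_simps)
  define N where "N = edge_axis ?V ?n (2 * L)"
  have "?V (2 * L + 4) = - ?V (2 * L)" "?V (2 * L + 5) = - ?V (2 * L + 1)"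
    using odd_polygon_window[of 0] odd_polygon_window[of 1] odd_polygon_window[of 4]
      odd_polygon_window[of 5]
    by (simp_all add: odd_gadget_def sgn_minus)
  then have same_axis: "edge_axis ?V ?n (2 * L + 4) = N"
    by (simp only: N_def edge_axis_def edge_angle_def odd_polygon_mod) (simp add: ac_simps)
  have "vertex_rotor 3 ?V ?n (0 + 2 * L) = (-1) ^ (2 * L) *\<^sub>R vertex_rotor 3 ?V ?n 0"
    by (rule vertex_rotor_right_angles) (simp only: odd_polygon_mod, simp add: odd_polygon_right_angle)
  then have "vertex_rotor 3 ?V ?n (Suc (2 * L)) = (0, - N)"
    using edge_rotor_three_quarter_angle[where V = ?V and n = ?n, OF three_quarter, of "2 * L"] by (simp add: N_def)
  moreover have "vertex_rotor 3 ?V ?n (Suc (2 * L) + 3) = (-1) ^ 3 *\<^sub>R vertex_rotor 3 ?V ?n (Suc (2 * L))"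
    by (rule vertex_rotor_right_angles) (simp only: odd_polygon_mod, simp add: odd_polygon_right_angle)
  ultimately have "vertex_rotor 3 ?V ?n (2 * L + 4) = (0, N)"
    by (simp add: numeral_eq_Suc)
  then have "vertex_rotor 3 ?V ?n (Suc (2 * L + 4)) = qmult (0, - N) (0, N)"
    using edge_rotor_three_quarter_angle[where V = ?V and n = ?n, OF three_quarter, of "2 * L + 4"] same_axis
    by (simp only: vertex_rotor.simps(2)) simp
  also have "\<dots> = qone"
    using edge_axis_unit[of "2 * L"] by (simp add: qmult_def qone_def N_def)
  finally show ?thesis
    by (simp add: ac_simps)
qed

lemma odd_polygon_trivial_monodromy:
  "spherical_polygon (2 * L + 5) (odd_polygon L) \<and> nondegenerate_polygon (2 * L + 5) (odd_polygon L) \<and>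
   trivial_lifted_monodromy 3 (2 * L + 5) (odd_polygon L)"
proof -
  interpret minor_arc_polygon "odd_polygon L" "2 * L + 5"
    by (rule minor_arc_odd_polygon)
  show ?thesis
    using inj_on_odd_polygon norm_odd_polygon odd_polygon_triple odd_polygon_mod
      trivial_lifted_monodromy_if_vertex_rotor[OF odd_polygon_vertex_rotor]
    by (simp add: spherical_polygon_def nondegenerate_polygon_if_periodic)
qed

end

theorem corollary1:
  fixes n :: nat
  assumes "n \<ge> 6"
  shows "\<exists>V. spherical_polygon n V \<and> nondegenerate_polygon n V \<and>
             trivial_lifted_monodromy 3 n V"
proof (cases "even n")
  case True
  then obtain m where "n = 2 * m"
    by (rule evenE)
  then show ?thesis
    using zigzag_conic_cycle_trivial_monodromy[of m] assms by auto
next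
  case False
  define L where "L = (n - 5) div 2"
  have "1 \<le> L" "n = 2 * L + 5"
    using False assms unfolding L_def by presburger+
  then show ?thesis
    using odd_polygon_trivial_monodromy by blast
qed

end
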